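(* Let $S$ be a completely simple semigroup. If $S$ is DSC, then $S$ is a group.
   Context: For a semigroup $S$, a diagonal subsemigroup of $S\times S$ is a subsemigroup of $S\times S$ containing $\Delta=\{(s,s)\colon s\in S\}$. A congruence on $S$ is a diagonal subsemigroup of $S\times S$ that is symmetric and transitive. A semigroup $S$ is DSC if every diagonal subsemigroup of $S\times S$ is a congruence on $S$. An idempotent $e$ of $S$ is primitive if it is minimal in the order $e\le f\iff ef=fe=e$ on idempotents. A semigroup is completely simple if it is simple (has no ideals other than itself) and has a primitive idempotent. *)

theory Defs
  imports Main
begin

text \<open>A semigroup S is modelled as a type of class semigroup_mult (carrier = UNIV).\<close>

definition diagonal_subsemigroup :: "('a::semigroup_mult \<times> 'a) set \<Rightarrow> bool" where
  "diagonal_subsemigroup D \<longleftrightarrow>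
     Id \<subseteq> D \<and> (\<forall>a b c d. (a, b) \<in> D \<longrightarrow> (c, d) \<in> D \<longrightarrow> (a * c, b * d) \<in> D)"

definition congruence_sg :: "('a::semigroup_mult \<times> 'a) set \<Rightarrow> bool" where
  "congruence_sg D \<longleftrightarrow> diagonal_subsemigroup D \<and> sym D \<and> trans D"

definition DSC :: "'a::semigroup_mult itself \<Rightarrow> bool" where
  "DSC _ \<longleftrightarrow> (\<forall>D :: ('a \<times> 'a) set. diagonal_subsemigroup D \<longrightarrow> congruence_sg D)"

definition idempotent :: "'a::semigroup_mult \<Rightarrow> bool" where
  "idempotent e \<longleftrightarrow> e * e = e"

definition idem_le :: "'a::semigroup_mult \<Rightarrow> 'a \<Rightarrow> bool" where
  "idem_le e f \<longleftrightarrow> e * f = e \<and> f * e = e"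

definition primitive_idempotent :: "'a::semigroup_mult \<Rightarrow> bool" where
  "primitive_idempotent e \<longleftrightarrow> idempotent e \<and>
     (\<forall>f. idempotent f \<longrightarrow> idem_le f e \<longrightarrow> f = e)"

definition ideal_sg :: "'a::semigroup_mult set \<Rightarrow> bool" where
  "ideal_sg I \<longleftrightarrow> I \<noteq> {} \<and> (\<forall>s x. x \<in> I \<longrightarrow> s * x \<in> I \<and> x * s \<in> I)"

definition simple_sg :: "'a::semigroup_mult itself \<Rightarrow> bool" where
  "simple_sg _ \<longleftrightarrow> (\<forall>I :: 'a set. ideal_sg I \<longrightarrow> I = UNIV)"

definition completely_simple :: "'a::semigroup_mult itself \<Rightarrow> bool" where
  "completely_simple T \<longleftrightarrow> simple_sg T \<and> (\<exists>e :: 'a. primitive_idempotent e)"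

definition is_group_sg :: "'a::semigroup_mult itself \<Rightarrow> bool" where
  "is_group_sg _ \<longleftrightarrow> (\<exists>e :: 'a. (\<forall>x. e * x = x \<and> x * e = x) \<and>
                                  (\<forall>x. \<exists>y. x * y = e \<and> y * x = e))"

end

theory Submission
  imports Defs
begin

text \<open>
  Let \<open>e\<close> be a primitive idempotent of the completely simple semigroup \<open>S\<close>. Primitivity makes
  \<open>eSe\<close> a group, and simplicity then gives \<open>S x = S y x\<close> and \<open>x S = x y S\<close> for all \<open>x, y\<close>.
  So the relation "\<open>x\<close> and \<open>y\<close> generate the same principal left ideal" is an equivalence \<open>E\<close>
  with \<open>y x E x\<close>. For any \<open>a, b\<close> the relation \<open>E \<union> (E a \<times> E b)\<close>, with \<open>E a\<close> the class of \<open>a\<close>,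
  is then a diagonal subsemigroup; if it is symmetric, \<open>a E b\<close>. Under DSC all elements are therefore
  \<open>E\<close>-related to \<open>e\<close>, i.e. \<open>e\<close> is a right identity, and dually a left identity; the group
  \<open>eSe\<close> is then all of \<open>S\<close>.
\<close>

lemma primitive_idempotent_idem:
  "primitive_idempotent e \<Longrightarrow> e * e = e"
  unfolding primitive_idempotent_def idempotent_def by blast

lemma simple_sg_factor:
  fixes x y :: "'a::semigroup_mult"
  assumes "simple_sg TYPE('a)"
  shows "\<exists>a b. x = a * y * b"
proof -
  let ?I = "{z. \<exists>a b. z = a * y * b}"
  have "ideal_sg ?I"
    unfolding ideal_sg_def
  proof (intro conjI allI impI)
    show "?I \<noteq> {}" by blast
  next
    fix s z assume "z \<in> ?I"
    then obtain a b where "z = a * y * b" by blast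
    then have "s * z = (s * a) * y * b" "z * s = a * y * (b * s)"
      by (simp_all add: mult.assoc)
    then show "s * z \<in> ?I" "z * s \<in> ?I" by blast+
  qed
  with assms have "?I = UNIV" unfolding simple_sg_def by blast
  then show ?thesis by blast
qed

lemma primitive_idempotent_eq_if_below:
  assumes "primitive_idempotent e" "f * f = f" "e * f = f" "f * e = f"
  shows "f = e"
  using assms unfolding primitive_idempotent_def idempotent_def idem_le_def by blast

text \<open>If \<open>e = a x b\<close> with \<open>x \<in> eSe\<close>, then \<open>x (b' a')\<close> and \<open>(b' a') x\<close> are idempotents below \<open>e\<close>,
  where \<open>a' = e a e\<close>, \<open>b' = e b e\<close>; primitivity forces both to be \<open>e\<close>.\<close>
lemma primitive_idempotent_local_inverse:
  fixes e x :: "'a::semigroup_mult"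
  assumes pe: "primitive_idempotent e" and ex: "e * x = x" and xe: "x * e = x"
    and e_eq: "e = a * x * b"
  shows "\<exists>w. x * w = e \<and> w * x = e"
proof -
  have ee: "e * e = e" using pe by (rule primitive_idempotent_idem)
  define a' where "a' = e * a * e"
  define b' where "b' = e * b * e"
  have a'_e: "e * a' = a'" "a' * e = a'" and b'_e: "e * b' = b'" "b' * e = b'"
    unfolding a'_def b'_def using ee by (simp_all add: mult.assoc[symmetric]) (simp_all add: mult.assoc)
  have a'xb': "a' * x * b' = e"
  proof -
    have "a' * x * b' = e * (a * (e * x * e) * b) * e"
      unfolding a'_def b'_def by (simp add: mult.assoc)
    also have "\<dots> = e" using ex xe e_eq ee by (simp add: mult.assoc)
    finally show ?thesis .
  qed
  define f where "f = x * b' * a'"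
  have "f * f = x * (b' * (a' * x * b')) * a'" unfolding f_def by (simp add: mult.assoc)
  then have "f * f = f" unfolding f_def a'xb' b'_e .
  moreover have "e * f = f" "f * e = f"
    unfolding f_def using ex a'_e by (simp_all add: mult.assoc[symmetric]) (simp_all add: mult.assoc)
  ultimately have f: "f = e" using pe primitive_idempotent_eq_if_below by blast
  define g where "g = b' * a' * x"
  have "g * g = (b' * (a' * x * b')) * a' * x" unfolding g_def by (simp add: mult.assoc)
  then have "g * g = g" unfolding g_def a'xb' b'_e .
  moreover have "e * g = g" "g * e = g"
    unfolding g_def using xe b'_e by (simp_all add: mult.assoc[symmetric]) (simp_all add: mult.assoc)
  ultimately have g: "g = e" using pe primitive_idempotent_eq_if_below by blast
  show ?thesis
    using f g unfolding f_def g_def by (intro exI[of _ "b' * a'"]) (simp add: mult.assoc)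
qed

lemma completely_simple_left_ideal_mult:
  fixes e x y :: "'a::semigroup_mult"
  assumes pe: "primitive_idempotent e" and sim: "simple_sg TYPE('a)"
  shows "\<exists>s. x = s * (y * x)"
proof -
  have ee: "e * e = e" using pe by (rule primitive_idempotent_idem)
  obtain a b where x: "x = a * e * b" using simple_sg_factor[OF sim] by blast
  define g where "g = e * (y * a) * e"
  have "e * g = g" "g * e = g"
    unfolding g_def using ee by (simp_all add: mult.assoc[symmetric]) (simp_all add: mult.assoc)
  moreover obtain p q where "e = p * g * q" using simple_sg_factor[OF sim] by blast
  ultimately obtain w where w: "w * g = e"
    using primitive_idempotent_local_inverse[OF pe] by blast
  have "x = a * (w * g) * b" using x w by simp
  also have "\<dots> = (a * w * e) * (y * x)" unfolding g_def x by (simp add: mult.assoc)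
  finally show ?thesis by blast
qed

lemma completely_simple_right_ideal_mult:
  fixes e x y :: "'a::semigroup_mult"
  assumes pe: "primitive_idempotent e" and sim: "simple_sg TYPE('a)"
  shows "\<exists>s. x = (x * y) * s"
proof -
  have ee: "e * e = e" using pe by (rule primitive_idempotent_idem)
  obtain a b where x: "x = a * e * b" using simple_sg_factor[OF sim] by blast
  define g where "g = e * (b * y) * e"
  have "e * g = g" "g * e = g"
    unfolding g_def using ee by (simp_all add: mult.assoc[symmetric]) (simp_all add: mult.assoc)
  moreover obtain p q where "e = p * g * q" using simple_sg_factor[OF sim] by blast
  ultimately obtain w where w: "g * w = e"
    using primitive_idempotent_local_inverse[OF pe] by blast
  have "x = a * (g * w) * b" using x w by simp
  also have "\<dots> = (x * y) * (e * w * b)" unfolding g_def x by (simp add: mult.assoc)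
  finally show ?thesis by blast
qed

text \<open>The relations \<open>\<L>\<close> and \<open>\<R>\<close> of Green, with principal ideals taken without adjoining
  an identity.\<close>
definition green_L :: "('a::semigroup_mult \<times> 'a) set" where
  "green_L = {(x, y). (\<exists>s. x = s * y) \<and> (\<exists>t. y = t * x)}"

definition green_R :: "('a::semigroup_mult \<times> 'a) set" where
  "green_R = {(x, y). (\<exists>s. x = y * s) \<and> (\<exists>t. y = x * t)}"

lemma equiv_green_L:
  assumes "\<And>x::'a::semigroup_mult. \<exists>s. x = s * x"
  shows "equiv UNIV (green_L :: ('a \<times> 'a) set)"
proof (rule equivI)
  show "green_L \<subseteq> UNIV \<times> UNIV" by simp
  show "refl (green_L :: ('a \<times> 'a) set)"
    using assms unfolding refl_on_def green_L_def by simp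
  show "sym (green_L :: ('a \<times> 'a) set)"
    unfolding sym_def green_L_def by auto
  show "trans (green_L :: ('a \<times> 'a) set)"
  proof (rule transI)
    fix x y z :: 'a assume "(x, y) \<in> green_L" "(y, z) \<in> green_L"
    then obtain s t s' t' where xy: "x = s * y" "y = t * x" and yz: "y = s' * z" "z = t' * y"
      unfolding green_L_def by blast
    have "x = (s * s') * z" using xy(1) yz(1) by (simp add: mult.assoc)
    moreover have "z = (t' * t) * x" using xy(2) yz(2) by (simp add: mult.assoc)
    ultimately show "(x, z) \<in> green_L" unfolding green_L_def by blast
  qed
qed

lemma equiv_green_R:
  assumes "\<And>x::'a::semigroup_mult. \<exists>s. x = x * s"
  shows "equiv UNIV (green_R :: ('a \<times> 'a) set)"
proof (rule equivI)
  show "green_R \<subseteq> UNIV \<times> UNIV" by simp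
  show "refl (green_R :: ('a \<times> 'a) set)"
    using assms unfolding refl_on_def green_R_def by simp
  show "sym (green_R :: ('a \<times> 'a) set)"
    unfolding sym_def green_R_def by auto
  show "trans (green_R :: ('a \<times> 'a) set)"
  proof (rule transI)
    fix x y z :: 'a assume "(x, y) \<in> green_R" "(y, z) \<in> green_R"
    then obtain s t s' t' where xy: "x = y * s" "y = x * t" and yz: "y = z * s'" "z = y * t'"
      unfolding green_R_def by blast
    have "x = z * (s' * s)" using xy(1) yz(1) by (simp add: mult.assoc)
    moreover have "z = x * (t * t')" using xy(2) yz(2) by (simp add: mult.assoc)
    ultimately show "(x, z) \<in> green_R" unfolding green_R_def by blast
  qed
qed

lemma completely_simple_green_L:
  fixes e :: "'a::semigroup_mult"
  assumes "primitive_idempotent e" "simple_sg TYPE('a)"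
  shows "equiv UNIV (green_L :: ('a \<times> 'a) set)" and "\<And>x y::'a. (y * x, x) \<in> green_L"
proof -
  have cancel: "\<exists>s. x = s * (y * x)" for x y :: 'a
    using completely_simple_left_ideal_mult[OF assms] .
  show "(y * x, x) \<in> green_L" for x y :: 'a
    unfolding green_L_def mem_Collect_eq case_prod_conv by (metis cancel)
  show "equiv UNIV (green_L :: ('a \<times> 'a) set)"
    by (rule equiv_green_L) (metis cancel mult.assoc)
qed

lemma completely_simple_green_R:
  fixes e :: "'a::semigroup_mult"
  assumes "primitive_idempotent e" "simple_sg TYPE('a)"
  shows "equiv UNIV (green_R :: ('a \<times> 'a) set)" and "\<And>x y::'a. (x * y, x) \<in> green_R"
proof -
  have cancel: "\<exists>s. x = (x * y) * s" for x y :: 'a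
    using completely_simple_right_ideal_mult[OF assms] .
  show "(x * y, x) \<in> green_R" for x y :: 'a
    unfolding green_R_def mem_Collect_eq case_prod_conv by (metis cancel)
  show "equiv UNIV (green_R :: ('a \<times> 'a) set)"
    by (rule equiv_green_R) (metis cancel mult.assoc)
qed

lemma DSC_symmetric:
  "DSC TYPE('a::semigroup_mult) \<Longrightarrow> diagonal_subsemigroup (D :: ('a \<times> 'a) set) \<Longrightarrow> sym D"
  unfolding DSC_def congruence_sg_def by blast

lemma DSC_left_stable_equiv_total:
  fixes E :: "('a::semigroup_mult \<times> 'a) set"
  assumes dsc: "DSC TYPE('a)" and E: "equiv UNIV E" and stable: "\<And>x y. (y * x, x) \<in> E"
  shows "(a, b) \<in> E"
proof -
  have refl: "(x, x) \<in> E" for x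
    using E by (simp add: equiv_def refl_on_def)
  have sym: "(x, y) \<in> E \<Longrightarrow> (y, x) \<in> E" for x y
    using E by (meson equiv_def symD)
  have trans: "(x, y) \<in> E \<Longrightarrow> (y, z) \<in> E \<Longrightarrow> (x, z) \<in> E" for x y z
    using E by (meson equiv_def transD)
  define D where "D = E \<union> {(x, y). (x, a) \<in> E \<and> (y, b) \<in> E}"
  have diag: "diagonal_subsemigroup D"
    unfolding diagonal_subsemigroup_def
  proof (intro conjI allI impI)
    show "Id \<subseteq> D" unfolding D_def using refl by auto
  next
    fix x y x' y' assume "(x, y) \<in> D" "(x', y') \<in> D"
    then consider (in_E) "(x', y') \<in> E" | (in_product) "(x', a) \<in> E" "(y', b) \<in> E"
      unfolding D_def by auto
    then show "(x * x', y * y') \<in> D"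
    proof cases
      case in_E
      show ?thesis
        unfolding D_def using trans[OF stable[of x x'] trans[OF in_E sym[OF stable[of y y']]]] by simp
    next
      case in_product
      show ?thesis
        unfolding D_def using trans[OF stable[of x x'] in_product(1)] trans[OF stable[of y y'] in_product(2)]
        by simp
    qed
  qed
  have "sym D" using dsc diag by (rule DSC_symmetric)
  moreover have "(a, b) \<in> D" unfolding D_def using refl by simp
  ultimately have "(b, a) \<in> D" by (rule symD)
  then show ?thesis unfolding D_def using sym by auto
qed

lemma DSC_right_stable_equiv_total:
  fixes E :: "('a::semigroup_mult \<times> 'a) set"
  assumes dsc: "DSC TYPE('a)" and E: "equiv UNIV E" and stable: "\<And>x y. (x * y, x) \<in> E"
  shows "(a, b) \<in> E"
proof -
  have refl: "(x, x) \<in> E" for x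
    using E by (simp add: equiv_def refl_on_def)
  have sym: "(x, y) \<in> E \<Longrightarrow> (y, x) \<in> E" for x y
    using E by (meson equiv_def symD)
  have trans: "(x, y) \<in> E \<Longrightarrow> (y, z) \<in> E \<Longrightarrow> (x, z) \<in> E" for x y z
    using E by (meson equiv_def transD)
  define D where "D = E \<union> {(x, y). (x, a) \<in> E \<and> (y, b) \<in> E}"
  have diag: "diagonal_subsemigroup D"
    unfolding diagonal_subsemigroup_def
  proof (intro conjI allI impI)
    show "Id \<subseteq> D" unfolding D_def using refl by auto
  next
    fix x y x' y' assume "(x, y) \<in> D" "(x', y') \<in> D"
    then consider (in_E) "(x, y) \<in> E" | (in_product) "(x, a) \<in> E" "(y, b) \<in> E"
      unfolding D_def by auto
    then show "(x * x', y * y') \<in> D"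
    proof cases
      case in_E
      show ?thesis
        unfolding D_def using trans[OF stable[of x x'] trans[OF in_E sym[OF stable[of y y']]]] by simp
    next
      case in_product
      show ?thesis
        unfolding D_def using trans[OF stable[of x x'] in_product(1)] trans[OF stable[of y y'] in_product(2)]
        by simp
    qed
  qed
  have "sym D" using dsc diag by (rule DSC_symmetric)
  moreover have "(a, b) \<in> D" unfolding D_def using refl by simp
  ultimately have "(b, a) \<in> D" by (rule symD)
  then show ?thesis unfolding D_def using sym by auto
qed

theorem mainTheorem3:
  assumes "completely_simple TYPE('a::semigroup_mult)"
    and "DSC TYPE('a)"
  shows "is_group_sg TYPE('a)"
proof -
  have sim: "simple_sg TYPE('a)" using assms(1) unfolding completely_simple_def by blast
  obtain e :: 'a where pe: "primitive_idempotent e"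
    using assms(1) unfolding completely_simple_def by blast
  have ee: "e * e = e" using pe by (rule primitive_idempotent_idem)
  have right_id: "x * e = x" for x
  proof -
    have "(x, e) \<in> green_L"
      using DSC_left_stable_equiv_total[OF assms(2) completely_simple_green_L[OF pe sim]] by blast
    then obtain s where "x = s * e" unfolding green_L_def by blast
    then show ?thesis using ee by (simp add: mult.assoc)
  qed
  have left_id: "e * x = x" for x
  proof -
    have "(x, e) \<in> green_R"
      using DSC_right_stable_equiv_total[OF assms(2) completely_simple_green_R[OF pe sim]] by blast
    then obtain s where "x = e * s" unfolding green_R_def by blast
    then show ?thesis using ee by (simp add: mult.assoc[symmetric])
  qed
  have "\<exists>y. x * y = e \<and> y * x = e" for x
    using simple_sg_factor[OF sim, of e x] primitive_idempotent_local_inverse[OF pe left_id right_id]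
    by blast
  then show ?thesis unfolding is_group_sg_def using left_id right_id by blast
qed

end
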